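(* Let $q\ge2$ and $n>h\ge1$. For all integers $r\in\{0,1,\dots,h\}$ and $l\in\{r,\dots,q\}$, $$M_q(n,h)\le\frac{\binom{n+h-2r+q-1}{q-1}}{\binom lr\binom{q-1+h-2r}{h-r}}+\sum_{i=1}^{l-1}\binom qi\binom{n-1}{i-1}$$ (the right-hand side being interpreted as $+\infty$ if the denominator vanishes). In particular, taking $r=0,l=1$, $M_q(n,h)\le\binom{n+h+q-1}{q-1}\big/\binom{q-1+h}{h}$.
   Context: $\triangle_n^{q-1}=\{\mathbf x\in\mathbb Z^q:x_i\ge0,\sum_ix_i=n\}$, $d_1(\mathbf x,\mathbf y)=\frac12\sum_i|x_i-y_i|$. $M_q(n,h)$ is the largest size of a subset of $\triangle_n^{q-1}$ with pairwise $d_1$-distances $>h$ (equivalently, the largest multiset code of length $n$ over a $q$-ary alphabet correcting $h$ deletions). Convention: $\binom ab=0$ for integers $a<b$ with $a\ge0$. *)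

theory Defs
  imports Complex_Main
begin

definition simplex :: "nat \<Rightarrow> nat \<Rightarrow> (nat \<Rightarrow> nat) set" where
  "simplex q n = {x. (\<forall>i\<ge>q. x i = 0) \<and> (\<Sum>i<q. x i) = n}"

definition d1 :: "nat \<Rightarrow> (nat \<Rightarrow> nat) \<Rightarrow> (nat \<Rightarrow> nat) \<Rightarrow> real" where
  "d1 q x y = (\<Sum>i<q. \<bar>real (x i) - real (y i)\<bar>) / 2"

definition M :: "nat \<Rightarrow> nat \<Rightarrow> nat \<Rightarrow> nat" where
  "M q n h = Max {card C | C. C \<subseteq> simplex q n \<and>
       (\<forall>x\<in>C. \<forall>y\<in>C. x \<noteq> y \<longrightarrow> d1 q x y > real h)}"

text \<open>Binomial with integer top entry; zero when the top entry is negative (then a < b).\<close>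
definition ibinom :: "int \<Rightarrow> int \<Rightarrow> nat" where
  "ibinom a b = (if a < 0 \<or> b < 0 then 0 else nat a choose nat b)"

end

theory Submission imports Defs "HOL-Library.Multiset" begin

text \<open>
Codewords with at least \<open>l\<close> nonzero coordinates are handled by a packing argument. Fix \<open>l\<close>
coordinates in the support of such an \<open>x\<close>; removing one unit from \<open>r\<close> of them and then adding
\<open>h - r\<close> units on the other \<open>q - r\<close> coordinates yields
\<open>binomial l r * binomial (q - 1 + h - 2 r) (h - r)\<close> distinct points of the simplex of size
\<open>n + h - 2 r\<close>. If two codewords produced a common point, they would be at distance at most
\<open>h\<close>, so these sets are disjoint. Codewords supported on fewer than \<open>l\<close> coordinates are simply
counted: for a fixed support of size \<open>i\<close> there are \<open>binomial (n - 1) (i - 1)\<close> points of the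
simplex.
\<close>

definition simplex_on :: "nat set \<Rightarrow> nat \<Rightarrow> (nat \<Rightarrow> nat) set" where
  "simplex_on A m = {x. (\<forall>i. i \<notin> A \<longrightarrow> x i = 0) \<and> sum x A = m}"

definition support :: "nat \<Rightarrow> (nat \<Rightarrow> nat) \<Rightarrow> nat set" where
  "support q x = {i. i < q \<and> 0 < x i}"

lemma simplex_eq_simplex_on: "simplex q m = simplex_on {..<q} m"
  by (auto simp: simplex_def simplex_on_def)

lemma sum_eq_sum_support:
  assumes "finite A" "\<And>i. i \<notin> A \<Longrightarrow> f i = 0" "A \<subseteq> B" "finite B"
  shows "sum f B = sum f A"
  by (rule sum.mono_neutral_right) (use assms in auto)

lemma simplex_on_eq_image_count:
  assumes "finite A"
  shows "simplex_on A m = count ` multisets_of_size A m"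
proof
  show "count ` multisets_of_size A m \<subseteq> simplex_on A m"
  proof
    fix x assume "x \<in> count ` multisets_of_size A m"
    then obtain X where X: "set_mset X \<subseteq> A" "size X = m" "x = count X"
      by (auto simp: multisets_of_size_def)
    have "size X = sum (count X) A"
      unfolding size_multiset_overloaded_eq
      by (rule sum_eq_sum_support[symmetric]) (use assms X in \<open>auto simp: count_eq_zero_iff\<close>)
    then show "x \<in> simplex_on A m" using X by (auto simp: simplex_on_def count_eq_zero_iff)
  qed
next
  show "simplex_on A m \<subseteq> count ` multisets_of_size A m"
  proof
    fix x assume x: "x \<in> simplex_on A m"
    have "finite {i. x i > 0}"
      by (rule finite_subset[OF _ assms]) (use x in \<open>auto simp: simplex_on_def\<close>)
    then have count_X: "count (Abs_multiset x) = x" by (simp add: count_Abs_multiset)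
    have set_X: "set_mset (Abs_multiset x) \<subseteq> A"
      using x by (auto simp: simplex_on_def count_X simp flip: count_greater_zero_iff)
    have "size (Abs_multiset x) = sum x A"
      unfolding size_multiset_overloaded_eq count_X
      by (rule sum_eq_sum_support[symmetric])
        (use assms set_X count_X in \<open>auto simp: count_eq_zero_iff[symmetric]\<close>)
    then show "x \<in> count ` multisets_of_size A m"
      using x set_X count_X
      by (auto simp: simplex_on_def multisets_of_size_def intro!: image_eqI[of _ _ "Abs_multiset x"])
  qed
qed

lemma finite_simplex_on: "finite A \<Longrightarrow> finite (simplex_on A m)"
  by (simp add: simplex_on_eq_image_count finite_multisets_of_size)

lemma card_simplex_on:
  assumes "finite A"
  shows "card (simplex_on A m) = (card A + m - 1) choose m"
proof -
  have "inj_on count (multisets_of_size A m)"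
    by (auto simp: inj_on_def multiset_eq_iff)
  then show ?thesis
    by (simp add: simplex_on_eq_image_count[OF assms] card_image card_multisets_of_size[OF assms])
qed

lemma finite_simplex: "finite (simplex q m)"
  by (simp add: simplex_eq_simplex_on finite_simplex_on)

lemma card_simplex:
  assumes "q \<ge> 1"
  shows "card (simplex q m) = (m + q - 1) choose (q - 1)"
proof -
  have "card (simplex q m) = (m + q - 1) choose m"
    by (simp add: simplex_eq_simplex_on card_simplex_on add.commute)
  also have "\<dots> = (m + q - 1) choose (q - 1)"
    using binomial_symmetric[of m "m + q - 1"] assms by (simp add: add.commute)
  finally show ?thesis .
qed

lemma sum_simplex_on:
  assumes "b \<in> simplex_on B m" "B \<subseteq> {..<q}"
  shows "sum b {..<q} = m"
  using assms sum_eq_sum_support[of B b "{..<q}"] finite_subset[OF assms(2)]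
  by (simp add: simplex_on_def)

lemma card_le_of_subset_support:
  assumes x: "x \<in> simplex q n" and S: "S \<subseteq> support q x"
  shows "card S \<le> n"
proof -
  have "card S = (\<Sum>i\<in>S. 1)" by simp
  also have "\<dots> \<le> sum x S" by (rule sum_mono) (use S in \<open>auto simp: support_def\<close>)
  also have "\<dots> \<le> sum x {..<q}" by (rule sum_mono2) (use S in \<open>auto simp: support_def\<close>)
  finally show ?thesis using x by (simp add: simplex_def)
qed

definition shift :: "(nat \<Rightarrow> nat) \<Rightarrow> nat set \<times> (nat \<Rightarrow> nat) \<Rightarrow> nat \<Rightarrow> nat" where
  "shift x = (\<lambda>(S, b) i. x i - of_bool (i \<in> S) + b i)"

definition shifts :: "nat \<Rightarrow> nat set \<Rightarrow> nat \<Rightarrow> nat \<Rightarrow> (nat set \<times> (nat \<Rightarrow> nat)) set" where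
  "shifts q P r k = (SIGMA S:{S. S \<subseteq> P \<and> card S = r}. simplex_on ({..<q} - S) k)"

lemma real_shift:
  assumes "S \<subseteq> support q x"
  shows "real (shift x (S, b) i) = real (x i) - of_bool (i \<in> S) + real (b i)"
  using assms by (cases "i \<in> S") (auto simp: shift_def support_def of_nat_diff)

lemma shift_in_simplex:
  assumes x: "x \<in> simplex q n" and S: "S \<subseteq> support q x" "card S = r"
    and b: "b \<in> simplex_on ({..<q} - S) k"
  shows "shift x (S, b) \<in> simplex q (n - r + k)"
proof -
  have Sq: "S \<subseteq> {..<q}" using S by (auto simp: support_def)
  have "r \<le> n" using card_le_of_subset_support[OF x S(1)] S(2) by simp
  have "real (\<Sum>i<q. shift x (S, b) i)
      = real (sum x {..<q}) - (\<Sum>i<q. of_bool (i \<in> S)) + real (sum b {..<q})"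
    by (simp add: real_shift[OF S(1)] sum.distrib sum_subtractf)
  also have "\<dots> = real (n - r + k)"
    using x S sum_simplex_on[OF b] \<open>r \<le> n\<close>
    by (simp add: simplex_def of_nat_diff Int_absorb1[OF Sq])
  finally have "(\<Sum>i<q. shift x (S, b) i) = n - r + k" by (simp only: of_nat_eq_iff)
  moreover have "shift x (S, b) i = 0" if "\<not> i < q" for i
    using that x b by (auto simp: shift_def simplex_def simplex_on_def)
  ultimately show ?thesis by (auto simp: simplex_def)
qed

lemma inj_on_shift:
  assumes "P \<subseteq> support q x"
  shows "inj_on (shift x) (shifts q P r k)"
proof (rule inj_onI, clarify)
  fix S b S' b'
  assume u: "(S, b) \<in> shifts q P r k" and v: "(S', b') \<in> shifts q P r k"
    and eq: "shift x (S, b) = shift x (S', b')"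
  have eq_i: "x i - of_bool (i \<in> S) + b i = x i - of_bool (i \<in> S') + b' i" for i
    using fun_cong[OF eq, of i] by (simp add: shift_def)
  have pos: "i \<in> S \<union> S' \<Longrightarrow> 0 < x i" for i
    using u v assms by (auto simp: shifts_def support_def)
  have zero: "i \<in> S \<Longrightarrow> b i = 0" "i \<in> S' \<Longrightarrow> b' i = 0" for i
    using u v by (auto simp: shifts_def simplex_on_def)
  have "S = S'"
  proof (rule set_eqI)
    fix i show "i \<in> S \<longleftrightarrow> i \<in> S'"
      using eq_i[of i] pos[of i] zero[of i] by (cases "i \<in> S"; cases "i \<in> S'") auto
  qed
  then show "S = S' \<and> b = b'" using eq_i by auto
qed

lemma card_shifts:
  assumes "P \<subseteq> {..<q}" "card P = l"
  shows "card (shifts q P r k) = (l choose r) * ((q - r + k - 1) choose k)"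
proof -
  have finP: "finite P" using assms(1) finite_subset by blast
  have "card (shifts q P r k) = (\<Sum>S\<in>{S. S \<subseteq> P \<and> card S = r}. card (simplex_on ({..<q} - S) k))"
    unfolding shifts_def by (rule card_SigmaI) (use finP in \<open>auto intro: finite_simplex_on\<close>)
  also have "\<dots> = (\<Sum>S\<in>{S. S \<subseteq> P \<and> card S = r}. (q - r + k - 1) choose k)"
  proof (rule sum.cong[OF refl])
    fix S assume "S \<in> {S. S \<subseteq> P \<and> card S = r}"
    then have "card ({..<q} - S) = q - r"
      using assms(1) by (subst card_Diff_subset) (auto intro: finite_subset)
    then show "card (simplex_on ({..<q} - S) k) = (q - r + k - 1) choose k"
      by (simp add: card_simplex_on)
  qed
  also have "\<dots> = (l choose r) * ((q - r + k - 1) choose k)"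
    using n_subsets[OF finP, of r] assms(2) by simp
  finally show ?thesis .
qed

text \<open>A shift changes the coordinates by \<open>h\<close> units in total (\<open>r\<close> removed, \<open>h - r\<close> added),
  so a common shift of \<open>x\<close> and \<open>y\<close> gives \<open>\<Sum>i<q. |x i - y i| \<le> 2 h\<close>.\<close>
lemma d1_le_of_shift_eq:
  assumes eq: "shift x (S, b) = shift y (S', b')"
    and S: "S \<subseteq> support q x" "S' \<subseteq> support q y" "card S = r" "card S' = r"
    and b: "b \<in> simplex_on ({..<q} - S) (h - r)" "b' \<in> simplex_on ({..<q} - S') (h - r)"
    and "r \<le> h"
  shows "d1 q x y \<le> real h"
proof -
  have Sq: "S \<subseteq> {..<q}" "S' \<subseteq> {..<q}" using S by (auto simp: support_def)
  have "\<bar>real (x i) - real (y i)\<bar> \<le> of_bool (i \<in> S) + of_bool (i \<in> S') + real (b i) + real (b' i)" for i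
  proof -
    have "real (x i) - real (y i) = of_bool (i \<in> S) - of_bool (i \<in> S') + real (b' i) - real (b i)"
      using arg_cong[OF fun_cong[OF eq, of i], of real] by (simp add: real_shift[OF S(1)] real_shift[OF S(2)])
    then show ?thesis by (cases "i \<in> S"; cases "i \<in> S'") (auto simp: abs_le_iff)
  qed
  then have "(\<Sum>i<q. \<bar>real (x i) - real (y i)\<bar>)
      \<le> (\<Sum>i<q. of_bool (i \<in> S) + of_bool (i \<in> S') + real (b i) + real (b' i))"
    by (rule sum_mono)
  also have "\<dots> = (\<Sum>i<q. of_bool (i \<in> S)) + (\<Sum>i<q. of_bool (i \<in> S'))
      + real (sum b {..<q}) + real (sum b' {..<q})"
    by (simp only: sum.distrib of_nat_sum)
  also have "\<dots> = 2 * real h"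
    using S \<open>r \<le> h\<close> sum_simplex_on[OF b(1)] sum_simplex_on[OF b(2)]
    by (simp add: of_nat_diff Int_absorb1[OF Sq(1)] Int_absorb1[OF Sq(2)])
  finally show ?thesis by (simp add: d1_def)
qed

lemma card_mult_le_card_of_disjoint_subsets:
  assumes "finite C" "finite U" "\<And>x. x \<in> C \<Longrightarrow> T x \<subseteq> U"
    and "\<And>x y. x \<in> C \<Longrightarrow> y \<in> C \<Longrightarrow> x \<noteq> y \<Longrightarrow> T x \<inter> T y = {}"
    and "\<And>x. x \<in> C \<Longrightarrow> k \<le> card (T x)"
  shows "card C * k \<le> card U"
proof -
  have fin: "\<And>x. x \<in> C \<Longrightarrow> finite (T x)" using assms(2,3) finite_subset by blast
  have "card C * k \<le> (\<Sum>x\<in>C. card (T x))"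
    using sum_mono[of C "\<lambda>_. k" "\<lambda>x. card (T x)"] assms(5) by simp
  also have "\<dots> = card (\<Union>x\<in>C. T x)"
    by (rule card_UN_disjoint[symmetric]) (use assms fin in auto)
  also have "\<dots> \<le> card U"
    by (rule card_mono) (use assms in auto)
  finally show ?thesis .
qed

lemma card_code_large_support:
  assumes C: "C \<subseteq> simplex q n" and code: "\<forall>x\<in>C. \<forall>y\<in>C. x \<noteq> y \<longrightarrow> d1 q x y > real h"
    and "r \<le> h" "r \<le> l"
  shows "card {x\<in>C. l \<le> card (support q x)} * ((l choose r) * ((q - r + (h - r) - 1) choose (h - r)))
           \<le> card (simplex q (n - r + (h - r)))"
proof -
  define C' where "C' = {x\<in>C. l \<le> card (support q x)}"
  have "\<exists>P. P \<subseteq> support q x \<and> card P = l" if "x \<in> C'" for x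
    using that by (auto simp: C'_def support_def intro: obtain_subset_with_card_n)
  then obtain P where P: "\<And>x. x \<in> C' \<Longrightarrow> P x \<subseteq> support q x \<and> card (P x) = l" by metis
  define T where "T x = shift x ` shifts q (P x) r (h - r)" for x
  show ?thesis unfolding C'_def[symmetric]
  proof (rule card_mult_le_card_of_disjoint_subsets[where T = T])
    show "finite C'" using C finite_simplex by (auto simp: C'_def intro: finite_subset)
    show "finite (simplex q (n - r + (h - r)))" by (rule finite_simplex)
  next
    fix x assume x: "x \<in> C'"
    then show "T x \<subseteq> simplex q (n - r + (h - r))"
      using C P[OF x] shift_in_simplex[of x q n]
      by (auto simp: T_def shifts_def C'_def)
    have "P x \<subseteq> {..<q}" using P[OF x] by (auto simp: support_def)
    then show "(l choose r) * ((q - r + (h - r) - 1) choose (h - r)) \<le> card (T x)"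
      using P[OF x] card_shifts card_image[OF inj_on_shift] by (simp add: T_def)
  next
    fix x y assume x: "x \<in> C'" and y: "y \<in> C'" and "x \<noteq> y"
    then have far: "d1 q x y > real h" using code by (auto simp: C'_def)
    show "T x \<inter> T y = {}"
    proof (rule ccontr)
      assume "T x \<inter> T y \<noteq> {}"
      then obtain S b S' b' where "(S, b) \<in> shifts q (P x) r (h - r)" "(S', b') \<in> shifts q (P y) r (h - r)"
        and "shift x (S, b) = shift y (S', b')"
        by (auto simp: T_def)
      then have "d1 q x y \<le> real h"
        using P[OF x] P[OF y] \<open>r \<le> h\<close> by (auto simp: shifts_def intro!: d1_le_of_shift_eq)
      then show False using far by simp
    qed
  qed
qed

lemma card_simplex_fixed_support:
  assumes S: "S \<subseteq> {..<q}" "card S = i" "1 \<le> i"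
  shows "card {x \<in> simplex q n. support q x = S} \<le> (n - 1) choose (i - 1)"
proof (cases "i \<le> n")
  case False
  have empty: "{x \<in> simplex q n. support q x = S} = {}"
    using card_le_of_subset_support[of _ q n S] S False by auto
  show ?thesis unfolding empty by simp
next
  case True
  define E where "E = {x \<in> simplex q n. support q x = S}"
  have finS: "finite S" using S finite_subset by blast
  define g where "g x = (\<lambda>j. x j - of_bool (j \<in> S))" for x :: "nat \<Rightarrow> nat"
  have "g ` E \<subseteq> simplex_on S (n - i)"
  proof
    fix y assume "y \<in> g ` E"
    then obtain x where x: "x \<in> E" and y: "y = g x" by auto
    then have pos: "j \<in> S \<Longrightarrow> 1 \<le> x j" for j by (auto simp: E_def support_def)
    have zero: "j \<notin> S \<Longrightarrow> x j = 0" for j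
      using x by (cases "j < q") (auto simp: E_def support_def simplex_def)
    have "sum x {..<q} = sum x S"
      by (rule sum_eq_sum_support) (use S finS zero in auto)
    then have "sum y S = n - i"
      using x pos S by (simp add: y g_def E_def simplex_def sum_subtractf_nat)
    moreover have "j \<notin> S \<Longrightarrow> y j = 0" for j
      using zero by (simp add: y g_def)
    ultimately show "y \<in> simplex_on S (n - i)" by (auto simp: simplex_on_def)
  qed
  moreover have "inj_on g E"
  proof (rule inj_onI, rule ext)
    fix x y j assume x: "x \<in> E" and y: "y \<in> E" and eq: "g x = g y"
    have "x j - of_bool (j \<in> S) = y j - of_bool (j \<in> S)"
      using fun_cong[OF eq, of j] by (simp add: g_def)
    moreover have "j \<in> S \<Longrightarrow> 0 < x j \<and> 0 < y j"
      using x y by (auto simp: E_def support_def)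
    ultimately show "x j = y j" by (cases "j \<in> S") auto
  qed
  ultimately have "card E \<le> card (simplex_on S (n - i))"
    using card_inj_on_le finite_simplex_on finS by blast
  also have "\<dots> = (n - 1) choose (n - i)" using card_simplex_on[OF finS] S True by simp
  also have "\<dots> = (n - 1) choose (i - 1)"
    using binomial_symmetric[of "i - 1" "n - 1"] True S by simp
  finally show ?thesis by (simp add: E_def)
qed

lemma card_simplex_small_support:
  assumes "n \<ge> 1"
  shows "card {x \<in> simplex q n. card (support q x) < l}
           \<le> (\<Sum>i=1..<l. (q choose i) * ((n - 1) choose (i - 1)))"
proof -
  define E where "E S = {x \<in> simplex q n. support q x = S}" for S
  define Ss where "Ss i = {S. S \<subseteq> {..<q} \<and> card S = i}" for i
  have finSs: "finite (Ss i)" for i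
    by (rule finite_subset[of _ "Pow {..<q}"]) (auto simp: Ss_def)
  have "support q x \<noteq> {}" if "x \<in> simplex q n" for x
  proof
    assume "support q x = {}"
    then have "sum x {..<q} = 0" by (auto simp: support_def intro: sum.neutral)
    then show False using that assms by (simp add: simplex_def)
  qed
  then have "{x \<in> simplex q n. card (support q x) < l} \<subseteq> (\<Union>i\<in>{1..<l}. \<Union>S\<in>Ss i. E S)"
    by (auto simp: E_def Ss_def support_def Suc_le_eq card_gt_0_iff)
  then have "card {x \<in> simplex q n. card (support q x) < l} \<le> card (\<Union>i\<in>{1..<l}. \<Union>S\<in>Ss i. E S)"
    by (rule card_mono[rotated]) (auto simp: E_def intro: finite_subset[OF _ finite_simplex])
  also have "\<dots> \<le> (\<Sum>i=1..<l. card (\<Union>S\<in>Ss i. E S))" by (rule card_UN_le) simp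
  also have "\<dots> \<le> (\<Sum>i=1..<l. \<Sum>S\<in>Ss i. card (E S))" by (intro sum_mono card_UN_le finSs)
  also have "\<dots> \<le> (\<Sum>i=1..<l. \<Sum>S\<in>Ss i. (n - 1) choose (i - 1))"
    unfolding E_def Ss_def by (intro sum_mono card_simplex_fixed_support) auto
  also have "\<dots> = (\<Sum>i=1..<l. (q choose i) * ((n - 1) choose (i - 1)))"
    by (simp add: Ss_def n_subsets)
  finally show ?thesis .
qed

lemma M_attained:
  obtains C where "C \<subseteq> simplex q n" "\<forall>x\<in>C. \<forall>y\<in>C. x \<noteq> y \<longrightarrow> d1 q x y > real h"
    "card C = M q n h"
proof -
  define K where "K = {card C | C. C \<subseteq> simplex q n \<and>
       (\<forall>x\<in>C. \<forall>y\<in>C. x \<noteq> y \<longrightarrow> d1 q x y > real h)}"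
  have "K \<subseteq> card ` Pow (simplex q n)" by (auto simp: K_def)
  then have "finite K" using finite_simplex finite_subset by blast
  moreover have "0 \<in> K" unfolding K_def by (auto intro!: exI[of _ "{}"])
  ultimately have "Max K \<in> K" using Max_in by blast
  then show ?thesis using that by (auto simp: K_def M_def)
qed

lemma M_le_bound:
  assumes "1 \<le> q" "h < n" "r \<le> h" "r \<le> l"
    and D: "D = (l choose r) * ((q - r + (h - r) - 1) choose (h - r))" "D > 0"
  shows "real (M q n h) \<le> real ((n - r + (h - r) + q - 1) choose (q - 1)) / real D
      + (\<Sum>i=1..<l. real (q choose i) * real ((n - 1) choose (i - 1)))"
proof -
  obtain C where C: "C \<subseteq> simplex q n" and code: "\<forall>x\<in>C. \<forall>y\<in>C. x \<noteq> y \<longrightarrow> d1 q x y > real h"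
    and card_C: "card C = M q n h" by (rule M_attained)
  define C1 where "C1 = {x\<in>C. l \<le> card (support q x)}"
  define C2 where "C2 = {x\<in>C. card (support q x) < l}"
  have "finite C" using C finite_simplex finite_subset by blast
  then have "card C = card C1 + card C2"
    by (subst card_Un_disjoint[symmetric]) (auto simp: C1_def C2_def intro: arg_cong[of _ _ card])
  have "card C1 * D \<le> (n - r + (h - r) + q - 1) choose (q - 1)"
    using card_code_large_support[OF C code \<open>r \<le> h\<close> \<open>r \<le> l\<close>] card_simplex[OF \<open>1 \<le> q\<close>]
    by (simp add: C1_def D)
  then have C1: "real (card C1) \<le> real ((n - r + (h - r) + q - 1) choose (q - 1)) / real D"
    using \<open>D > 0\<close> by (simp add: pos_le_divide_eq flip: of_nat_mult)
  have "card C2 \<le> card {x \<in> simplex q n. card (support q x) < l}"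
    using C by (intro card_mono finite_Collect_conjI) (auto simp: C2_def finite_simplex)
  also have "\<dots> \<le> (\<Sum>i=1..<l. (q choose i) * ((n - 1) choose (i - 1)))"
    using \<open>h < n\<close> by (intro card_simplex_small_support) simp
  finally have "real (card C2) \<le> real (\<Sum>i=1..<l. (q choose i) * ((n - 1) choose (i - 1)))"
    by (simp only: of_nat_le_iff)
  then have C2: "real (card C2) \<le> (\<Sum>i=1..<l. real (q choose i) * real ((n - 1) choose (i - 1)))"
    by (simp only: of_nat_sum of_nat_mult)
  show ?thesis using C1 C2 \<open>card C = card C1 + card C2\<close> card_C by simp
qed

theorem mainTheorem18:
  fixes q n h r l :: nat
  assumes "q \<ge> 2" and "h \<ge> 1" and "n > h" and "r \<le> h" and "r \<le> l" and "l \<le> q"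
  shows "(ibinom (int l) (int r) * ibinom (int q - 1 + int h - 2 * int r) (int h - int r) \<noteq> 0 \<longrightarrow>
           real (M q n h) \<le>
             real (ibinom (int n + int h - 2 * int r + int q - 1) (int q - 1))
               / real (ibinom (int l) (int r) * ibinom (int q - 1 + int h - 2 * int r) (int h - int r))
             + (\<Sum>i=1..<l. real (q choose i) * real ((n - 1) choose (i - 1))))
       \<and> real (M q n h) \<le> real ((n + h + q - 1) choose (q - 1)) / real ((q - 1 + h) choose h)"
proof (intro conjI impI)
  assume nz: "ibinom (int l) (int r) * ibinom (int q - 1 + int h - 2 * int r) (int h - int r) \<noteq> 0"
  then have nonneg: "int q - 1 + int h - 2 * int r \<ge> 0" by (auto simp: ibinom_def split: if_splits)
  then have "nat (int q - 1 + int h - 2 * int r) = q - r + (h - r) - 1" using assms by linarith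
  with nonneg have den: "ibinom (int l) (int r) * ibinom (int q - 1 + int h - 2 * int r) (int h - int r)
      = (l choose r) * ((q - r + (h - r) - 1) choose (h - r))"
    using assms by (auto simp: ibinom_def nat_diff_distrib)
  have "nat (int n + int h - 2 * int r + int q - 1) = n - r + (h - r) + q - 1" using assms by linarith
  then have num: "ibinom (int n + int h - 2 * int r + int q - 1) (int q - 1)
      = (n - r + (h - r) + q - 1) choose (q - 1)"
    using assms by (simp add: ibinom_def nat_diff_distrib)
  show "real (M q n h) \<le>
      real (ibinom (int n + int h - 2 * int r + int q - 1) (int q - 1))
        / real (ibinom (int l) (int r) * ibinom (int q - 1 + int h - 2 * int r) (int h - int r))
      + (\<Sum>i=1..<l. real (q choose i) * real ((n - 1) choose (i - 1)))"
    unfolding num using M_le_bound[OF _ _ \<open>r \<le> h\<close> \<open>r \<le> l\<close> den] nz assms by simp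
next
  have "q - 0 + (h - 0) - 1 = q - 1 + h" "n - 0 + (h - 0) = n + h" using assms by simp_all
  then show "real (M q n h) \<le> real ((n + h + q - 1) choose (q - 1)) / real ((q - 1 + h) choose h)"
    using M_le_bound[of q h n 0 0] assms by simp
qed

end
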